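(* Let $W$ be a non-negative symmetric $n\times n$ matrix with zero diagonal. Then \begin{enumerate} \item $\mathcal D(W)$ consists of exactly one matrix $D^*$; \item $\mathcal P(W)=\{P\in\mathcal P: P(W-D^* )=0\}$. \end{enumerate}
   Context: $\mathcal P=\{P\in M_n(\mathbb R): P\succeq0,\ P_{ii}=1\ \forall i\}$. For matrices, $P\circ W=\sum_{i,j}P_{ij}W_{ij}$. $\mathcal P(W)$ is the set of optimal solutions of the SDP: minimize $P\circ W$ subject to $P\in\mathcal P$. $\mathcal D(W)$ is the set of optimal solutions of its dual: maximize $\sum_iD_{ii}$ subject to $D$ diagonal and $W-D\succeq0$. Here $A\succeq0$ means $A$ is positive semidefinite. *)

theory Defs
  imports "HOL-Analysis.Analysis"
begin

text \<open>Real n x n matrices are represented as real^'n^'n, the dimension n being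
  the cardinality of the finite index type 'n.\<close>

definition psd :: "real^'n^'n \<Rightarrow> bool" where
  "psd A \<longleftrightarrow> transpose A = A \<and> (\<forall>x. 0 \<le> x \<bullet> (A *v x))"

definition frob :: "real^'n^'n \<Rightarrow> real^'n^'n \<Rightarrow> real" where
  "frob P W = (\<Sum>i\<in>UNIV. \<Sum>j\<in>UNIV. P$i$j * W$i$j)"

definition is_diag :: "real^'n^'n \<Rightarrow> bool" where
  "is_diag D \<longleftrightarrow> (\<forall>i j. i \<noteq> j \<longrightarrow> D$i$j = 0)"

definition Pset :: "(real^'n^'n) set" where
  "Pset = {P. psd P \<and> (\<forall>i. P$i$i = 1)}"

definition Popt :: "real^'n^'n \<Rightarrow> (real^'n^'n) set" where
  "Popt W = {P \<in> Pset. \<forall>Q\<in>Pset. frob P W \<le> frob Q W}"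

definition Dopt :: "real^'n^'n \<Rightarrow> (real^'n^'n) set" where
  "Dopt W = {D. is_diag D \<and> psd (W - D) \<and>
     (\<forall>D'. is_diag D' \<and> psd (W - D') \<longrightarrow> (\<Sum>i\<in>UNIV. D'$i$i) \<le> (\<Sum>i\<in>UNIV. D$i$i))}"

end

theory Submission
  imports Defs
begin

text \<open>
  Every psd matrix is a sum of rank-one matrices v v', so the Frobenius pairing of psd matrices
  P and M is a sum of terms v' M v \<ge> 0, and it vanishes iff M v = 0 for all these v, i.e.
  iff P M = 0. Hence P \<circ> W = tr D + P \<circ> (W - D) \<ge> tr D for every primal feasible P and
  dual feasible D.

  The dual has an optimum D by compactness, and complementary slackness holds: some primal
  feasible P satisfies P (W - D) = 0. Otherwise the all-ones vector lies outside the compact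
  convex set of diagonals of {X \<succeq> 0. X (W - D) = 0, tr X = n}; a separating hyperplane yields
  a diagonal Y with tr Y > 0 that is negative definite on the kernel of W - D, and
  D + \<epsilon> Y is then dual feasible with larger trace for small \<epsilon> > 0.

  Such a P attains the lower bound tr D, so the primal optima are exactly the primal feasible P
  with P (W - D) = 0. Any other dual optimum D' has the same trace, hence P (W - D') = 0 too,
  and comparing diagonals gives D'_ii = (P W)_ii = D_ii.
\<close>

lemma inner_matrix_vector_commute:
  fixes A :: "real^'n^'n"
  assumes "transpose A = A"
  shows "x \<bullet> (A *v y) = y \<bullet> (A *v x)"
  by (metis assms dot_lmul_matrix inner_commute transpose_matrix_vector)

lemma psd_transpose: "psd A \<Longrightarrow> transpose A = A"
  by (simp add: psd_def)

lemma psd_nonneg: "psd A \<Longrightarrow> 0 \<le> x \<bullet> (A *v x)"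
  by (simp add: psd_def)

lemma psd_iff_nonneg:
  "psd A \<longleftrightarrow> (\<forall>i j. A$i$j = A$j$i) \<and> (\<forall>x. 0 \<le> x \<bullet> (A *v x))"
  by (auto simp: psd_def transpose_def vec_eq_iff)

lemma inner_matrix_vector_axis: "axis i 1 \<bullet> (A *v axis j 1) = (A$i$j :: real)"
  by (simp add: inner_axis' matrix_vector_mult_basis column_def)

lemma psd_Cauchy_Schwarz:
  fixes A :: "real^'n^'n"
  assumes "psd A"
  shows "(y \<bullet> (A *v x))\<^sup>2 \<le> (x \<bullet> (A *v x)) * (y \<bullet> (A *v y))"
proof -
  define a b c where "a = x \<bullet> (A *v x)" and "b = y \<bullet> (A *v x)" and "c = y \<bullet> (A *v y)"
  have quadratic: "0 \<le> a + 2 * t * b + t\<^sup>2 * c" for t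
  proof -
    have "0 \<le> (x + t *\<^sub>R y) \<bullet> (A *v (x + t *\<^sub>R y))"
      using assms by (rule psd_nonneg)
    also have "\<dots> = a + 2 * t * b + t\<^sup>2 * c"
      using inner_matrix_vector_commute[OF psd_transpose[OF assms], of x y]
      by (simp add: a_def b_def c_def algebra_simps inner_add_left inner_add_right power2_eq_square)
    finally show ?thesis .
  qed
  show ?thesis
  proof (cases "c = 0")
    case True
    have "b = 0"
    proof (rule ccontr)
      assume "b \<noteq> 0"
      with quadratic[of "- (a + 1) / (2 * b)"] True show False by (simp add: field_simps)
    qed
    with True show ?thesis by (simp add: a_def b_def c_def)
  next
    case False
    then have "0 < c" using psd_nonneg[OF assms, of y] by (simp add: c_def)
    with quadratic[of "- b / c"] have "0 \<le> a * c - b\<^sup>2"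
      by (simp add: field_simps power2_eq_square)
    then show ?thesis by (simp add: a_def b_def c_def mult.commute)
  qed
qed

lemma psd_quadratic_form_zero_imp_kernel:
  assumes "psd A" and "x \<bullet> (A *v x) = 0"
  shows "A *v x = 0"
proof -
  have "((A *v x) \<bullet> (A *v x))\<^sup>2 \<le> 0"
    using psd_Cauchy_Schwarz[OF assms(1), of "A *v x" x] assms(2) by simp
  then show ?thesis by simp
qed

lemma psd_diag_nonneg: "psd A \<Longrightarrow> 0 \<le> A$i$i"
  using psd_nonneg[of A "axis i 1"] by (simp add: inner_matrix_vector_axis)

lemma psd_entry_square_le:
  assumes "psd A" shows "(A$i$j)\<^sup>2 \<le> A$i$i * A$j$j"
  using psd_Cauchy_Schwarz[OF assms, of "axis i 1" "axis j 1"]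
  by (simp add: inner_matrix_vector_axis mult.commute)

lemma psd_zero_diag_entry: "psd A \<Longrightarrow> A$i$i = 0 \<Longrightarrow> A$i$j = 0"
  using psd_entry_square_le[of A i j] by simp

lemma psd_entry_le_trace:
  assumes "psd X" shows "\<bar>X$i$j\<bar> \<le> trace X"
proof -
  have diag_le: "X$k$k \<le> trace X" for k
    unfolding trace_def by (rule member_le_sum) (auto intro: psd_diag_nonneg[OF assms])
  have "(X$i$j)\<^sup>2 \<le> (trace X)\<^sup>2"
    using psd_entry_square_le[OF assms, of i j] diag_le[of i] diag_le[of j]
      psd_diag_nonneg[OF assms, of i] psd_diag_nonneg[OF assms, of j]
    by (smt (verit) mult_mono power2_eq_square)
  moreover have "0 \<le> trace X"
    using psd_diag_nonneg[OF assms, of i] diag_le[of i] by linarith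
  ultimately show ?thesis
    using abs_le_square_iff[of "X$i$j" "trace X"] by simp
qed

lemma psd_add: "psd A \<Longrightarrow> psd B \<Longrightarrow> psd (A + B)"
  by (simp add: psd_iff_nonneg matrix_vector_mult_add_rdistrib inner_add_right add_nonneg_nonneg)

lemma psd_scaleR: "psd A \<Longrightarrow> 0 \<le> c \<Longrightarrow> psd (c *\<^sub>R A)"
  by (simp add: psd_def transpose_scalar scaleR_matrix_vector_assoc[symmetric])

lemma closed_psd: "closed {A :: real^'n^'n. psd A}"
proof -
  have "{A :: real^'n^'n. psd A} =
      (\<Inter>i. \<Inter>j. {A. A$i$j = A$j$i}) \<inter> (\<Inter>x. {A. 0 \<le> x \<bullet> (A *v x)})"
    by (auto simp: psd_iff_nonneg)
  moreover have "closed \<dots>"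
    unfolding inner_vec_def matrix_vector_mult_def
    by (intro closed_Int closed_INT closed_Collect_eq closed_Collect_le continuous_intros ballI)
  ultimately show ?thesis by simp
qed

section \<open>Rank-one decomposition and the Frobenius pairing\<close>

definition outer :: "real^'n \<Rightarrow> real^'n \<Rightarrow> real^'n^'n" where
  "outer v w = (\<chi> i j. v$i * w$j)"

lemma outer_zero_right [simp]: "outer v 0 = 0"
  by (simp add: outer_def vec_eq_iff)

lemma inner_outer: "x \<bullet> (outer v w *v y) = (x \<bullet> v) * (w \<bullet> y)"
  unfolding outer_def inner_vec_def matrix_vector_mult_def sum_product
  by (simp add: sum_distrib_left mult_ac)

lemma trace_outer: "trace (outer v v) = v \<bullet> v"
  by (simp add: trace_def outer_def inner_vec_def)

lemma psd_outer: "psd (outer v v)"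
proof -
  have "transpose (outer v v) = outer v v"
    by (simp add: outer_def transpose_def mult.commute)
  moreover have "0 \<le> x \<bullet> (outer v v *v x)" for x
    by (simp add: inner_outer inner_commute)
  ultimately show ?thesis by (simp add: psd_def)
qed

lemma psd_sum_outer:
  assumes "psd P"
  shows "\<exists>vs. P = (\<Sum>v\<leftarrow>vs. outer v v)"
  using assms
proof (induction "card {i. P$i$i \<noteq> 0}" arbitrary: P rule: less_induct)
  case less
  show ?case
  proof (cases "\<forall>i. P$i$i = 0")
    case True
    then have "P = 0" using psd_zero_diag_entry[OF less.prems] by (simp add: vec_eq_iff)
    then show ?thesis by (intro exI[of _ "[]"]) simp
  next
    case False
    then obtain i where "P$i$i \<noteq> 0" by auto
    with psd_diag_nonneg[OF less.prems] have pivot_pos: "0 < P$i$i"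
      by (metis order.not_eq_order_implies_strict)
    define w where "w = (1 / sqrt (P$i$i)) *\<^sub>R (P *v axis i 1)"
    have w: "w$j = P$j$i / sqrt (P$i$i)" for j
      by (simp add: w_def matrix_vector_mult_basis column_def)
    define P' where "P' = P - outer w w"
    \<comment> \<open>Schur complement step: the rest stays psd and loses the nonzero diagonal entry i.\<close>
    have psd': "psd P'"
    proof -
      have square_le: "(x \<bullet> w)\<^sup>2 \<le> x \<bullet> (P *v x)" for x
      proof -
        have "(x \<bullet> (P *v axis i 1))\<^sup>2 \<le> P$i$i * (x \<bullet> (P *v x))"
          using psd_Cauchy_Schwarz[OF less.prems, of x "axis i 1"]
          by (simp add: inner_matrix_vector_axis)
        then show ?thesis
          using pivot_pos by (simp add: w_def power_divide field_simps)
      qed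
      have "x \<bullet> (P' *v x) = x \<bullet> (P *v x) - (x \<bullet> w)\<^sup>2" for x
        unfolding P'_def matrix_vector_mult_diff_rdistrib inner_diff_right inner_outer
        by (simp add: inner_commute power2_eq_square)
      then have "0 \<le> x \<bullet> (P' *v x)" for x
        using square_le[of x] by simp
      moreover have "P'$j$k = P'$k$j" for j k
        using psd_transpose[OF less.prems]
        by (simp add: P'_def outer_def w mult.commute transpose_def vec_eq_iff)
      ultimately show ?thesis by (simp add: psd_iff_nonneg)
    qed
    have "{j. P'$j$j \<noteq> 0} \<subset> {j. P$j$j \<noteq> 0}"
    proof -
      have "P'$i$i = 0" using pivot_pos by (simp add: P'_def outer_def w power2_eq_square[symmetric])
      moreover have "P'$j$j = 0" if "P$j$j = 0" for j
      proof -
        have "w$j = 0" using psd_zero_diag_entry[OF less.prems that, of i] by (simp add: w)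
        with that show ?thesis by (simp add: P'_def outer_def)
      qed
      ultimately show ?thesis using \<open>P$i$i \<noteq> 0\<close> by auto
    qed
    then have "card {j. P'$j$j \<noteq> 0} < card {j. P$j$j \<noteq> 0}"
      by (simp add: psubset_card_mono)
    then obtain vs where "P' = (\<Sum>v\<leftarrow>vs. outer v v)"
      using less.hyps psd' by blast
    then have "P = (\<Sum>v\<leftarrow>w # vs. outer v v)"
      by (simp add: P'_def algebra_simps)
    then show ?thesis by blast
  qed
qed

lemma matrix_add_rdistrib: "(A + B) ** C = A ** C + B ** (C :: 'a::semiring_1^'p^'n)"
  by (simp add: matrix_matrix_mult_def vec_eq_iff algebra_simps sum.distrib)

lemma outer_matrix_mult:
  assumes "transpose M = M"
  shows "outer v v ** M = outer v (M *v v)"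
proof -
  have "(outer v v ** M)$i$j = (outer v (M *v v))$i$j" for i j
    using assms
    by (simp add: outer_def matrix_matrix_mult_def matrix_vector_mult_def sum_distrib_left
        transpose_def vec_eq_iff mult_ac)
  then show ?thesis by (simp add: vec_eq_iff)
qed

lemma sum_outer_matrix_mult:
  "transpose M = M \<Longrightarrow> (\<Sum>v\<leftarrow>vs. outer v v) ** M = (\<Sum>v\<leftarrow>vs. outer v (M *v v))"
  by (induction vs) (simp_all add: matrix_add_rdistrib outer_matrix_mult)

lemma frob_add: "frob (A + B) M = frob A M + frob B M"
  by (simp add: frob_def algebra_simps sum.distrib)

lemma frob_outer: "frob (outer v v) M = v \<bullet> (M *v v)"
  by (simp add: frob_def outer_def inner_vec_def matrix_vector_mult_def sum_distrib_left mult_ac)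

lemma frob_sum_outer: "frob (\<Sum>v\<leftarrow>vs. outer v v) M = (\<Sum>v\<leftarrow>vs. v \<bullet> (M *v v))"
  by (induction vs) (simp_all add: frob_add frob_outer, simp add: frob_def)

lemma frob_psd_nonneg:
  assumes "psd P" and "psd M"
  shows "0 \<le> frob P M"
proof -
  obtain vs where "P = (\<Sum>v\<leftarrow>vs. outer v v)" using psd_sum_outer[OF assms(1)] ..
  moreover have "0 \<le> (\<Sum>v\<leftarrow>vs. v \<bullet> (M *v v))"
    by (rule sum_list_nonneg) (auto intro: psd_nonneg[OF assms(2)])
  ultimately show ?thesis by (simp add: frob_sum_outer)
qed

lemma frob_psd_eq_0:
  assumes "psd P" and "psd M" and "frob P M = 0"
  shows "P ** M = 0"
proof -
  obtain vs where P: "P = (\<Sum>v\<leftarrow>vs. outer v v)" using psd_sum_outer[OF assms(1)] ..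
  have "(\<Sum>v\<leftarrow>vs. v \<bullet> (M *v v)) = 0" using assms(3) by (simp add: P frob_sum_outer)
  then have "\<forall>x\<in>set (map (\<lambda>v. v \<bullet> (M *v v)) vs). x = 0"
    using sum_list_nonneg_eq_0_iff[of "map (\<lambda>v. v \<bullet> (M *v v)) vs"] psd_nonneg[OF assms(2)]
    by auto
  then have "\<forall>v\<in>set vs. M *v v = 0"
    using psd_quadratic_form_zero_imp_kernel[OF assms(2)] by auto
  then have "(\<Sum>v\<leftarrow>vs. outer v (M *v v)) = 0"
    by (induction vs) simp_all
  then show ?thesis
    using sum_outer_matrix_mult[OF psd_transpose[OF assms(2)], of vs] by (simp add: P)
qed

lemma frob_eq_trace_mult: "transpose M = M \<Longrightarrow> frob P M = trace (P ** M)"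
  by (simp add: frob_def trace_def matrix_matrix_mult_def transpose_def vec_eq_iff)

lemma frob_psd_eq_0_iff: "psd P \<Longrightarrow> psd M \<Longrightarrow> frob P M = 0 \<longleftrightarrow> P ** M = 0"
  using frob_psd_eq_0 frob_eq_trace_mult[OF psd_transpose, of M P] by (force simp: trace_def)

section \<open>Existence of a dual optimum\<close>

definition dual_feasible :: "real^'n^'n \<Rightarrow> (real^'n^'n) set" where
  "dual_feasible W = {D. is_diag D \<and> psd (W - D)}"

lemma Dopt_eq: "Dopt W = {D \<in> dual_feasible W. \<forall>D'\<in>dual_feasible W. trace D' \<le> trace D}"
  by (auto simp: Dopt_def dual_feasible_def trace_def)

definition diagonal_matrix :: "real^'n \<Rightarrow> real^'n^'n" where
  "diagonal_matrix y = (\<chi> i j. if i = j then y$i else 0)"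

lemma diagonal_matrix_vector_mult: "diagonal_matrix y *v x = (\<chi> i. y$i * x$i)"
  by (simp add: diagonal_matrix_def matrix_vector_mult_def vec_eq_iff if_distrib if_distribR
      cong: if_cong)

lemma inner_diagonal_matrix: "x \<bullet> (diagonal_matrix y *v x) = (\<Sum>i\<in>UNIV. y$i * (x$i)\<^sup>2)"
  by (simp add: diagonal_matrix_vector_mult inner_vec_def power2_eq_square mult_ac)

lemma trace_diagonal_matrix: "trace (diagonal_matrix y) = (\<Sum>i\<in>UNIV. y$i)"
  by (simp add: trace_def diagonal_matrix_def)

lemma is_diag_diagonal_matrix: "is_diag (diagonal_matrix y)"
  by (simp add: is_diag_def diagonal_matrix_def)

lemma trace_scaleR: "trace (c *\<^sub>R A) = c * trace (A :: real^'n^'n)"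
  by (simp add: trace_def sum_distrib_left)

lemma continuous_on_trace: "continuous_on S (trace :: real^'n^'n \<Rightarrow> real)"
  unfolding trace_def by (intro continuous_intros)

lemma bounded_matrix_entrywise:
  assumes "\<And>A i j. A \<in> S \<Longrightarrow> \<bar>A$i$j\<bar> \<le> B"
  shows "bounded (S :: (real^'n^'n) set)"
proof -
  have "norm A \<le> real CARD('n) * (real CARD('n) * B)" if "A \<in> S" for A
  proof -
    have "norm A \<le> (\<Sum>i\<in>UNIV. norm (A$i))"
      unfolding norm_vec_def by (rule L2_set_le_sum) simp
    also have "\<dots> \<le> (\<Sum>i\<in>UNIV. \<Sum>j\<in>UNIV. \<bar>A$i$j\<bar>)"
      by (intro sum_mono norm_le_l1_cart)
    also have "\<dots> \<le> (\<Sum>i\<in>(UNIV::'n set). \<Sum>j\<in>(UNIV::'n set). B)"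
      by (intro sum_mono assms that)
    finally show ?thesis by simp
  qed
  then show ?thesis by (auto simp: bounded_iff)
qed

lemma closed_dual_feasible: "closed (dual_feasible W)"
proof -
  have eq: "dual_feasible W =
      (\<Inter>i. \<Inter>j. {D. i \<noteq> j \<longrightarrow> D$i$j = 0}) \<inter> (\<lambda>D. W - D) -` {A. psd A}"
    by (auto simp: dual_feasible_def is_diag_def)
  have "closed {D :: real^'n^'n. i \<noteq> j \<longrightarrow> D$i$j = 0}" for i j
    by (cases "i = j") (auto intro!: closed_Collect_eq continuous_intros)
  moreover have "closed ((\<lambda>D. W - D) -` {A. psd A})"
    by (intro continuous_closed_vimage closed_psd continuous_intros)
  ultimately show ?thesis
    unfolding eq by (intro closed_Int closed_INT ballI)
qed

lemma psd_add_scaleR_mat_1_exists: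
  fixes W :: "real^'n^'n"
  assumes "transpose W = W"
  shows "\<exists>c. psd (W + c *\<^sub>R mat 1)"
proof -
  obtain K where K: "\<And>x. norm (W *v x) \<le> norm x * K"
    using bounded_linear.bounded[OF matrix_vector_mul_bounded_linear] by blast
  have "0 \<le> x \<bullet> ((W + K *\<^sub>R mat 1) *v x)" for x
  proof -
    have "- (x \<bullet> (W *v x)) \<le> norm x * norm (W *v x)"
      using norm_cauchy_schwarz[of "- x" "W *v x"] by simp
    also have "\<dots> \<le> norm x * (norm x * K)"
      using K by (simp add: mult_left_mono)
    also have "\<dots> = K * (x \<bullet> x)"
      by (simp add: power2_norm_eq_inner[symmetric] power2_eq_square)
    finally show ?thesis
      by (simp add: matrix_vector_mult_add_rdistrib scaleR_matrix_vector_assoc[symmetric]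
          inner_add_right)
  qed
  moreover have "(W + K *\<^sub>R mat 1)$i$j = (W + K *\<^sub>R mat 1)$j$i" for i j
    using assms by (simp add: transpose_def vec_eq_iff mat_def)
  ultimately show ?thesis by (auto simp: psd_iff_nonneg)
qed

lemma bounded_dual_feasible_trace_ge:
  "bounded (dual_feasible W \<inter> {D. t \<le> trace D})"
proof -
  define s where "s = (\<Sum>k\<in>UNIV. \<bar>W$k$k\<bar>)"
  show ?thesis
  proof (rule bounded_matrix_entrywise)
    fix D i j assume "D \<in> dual_feasible W \<inter> {D. t \<le> trace D}"
    then have diag: "is_diag D" and psd: "psd (W - D)" and t: "t \<le> trace D"
      by (auto simp: dual_feasible_def)
    have upper: "D$k$k \<le> \<bar>W$k$k\<bar>" for k
      using psd_diag_nonneg[OF psd, of k] by simp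
    have "trace D = D$i$i + (\<Sum>k\<in>UNIV - {i}. D$k$k)"
      unfolding trace_def by (simp add: sum.remove)
    also have "\<dots> \<le> D$i$i + s"
    proof -
      have "(\<Sum>k\<in>UNIV - {i}. D$k$k) \<le> (\<Sum>k\<in>UNIV - {i}. \<bar>W$k$k\<bar>)"
        by (intro sum_mono upper)
      also have "\<dots> \<le> s"
        unfolding s_def by (rule sum_mono2) auto
      finally show ?thesis by simp
    qed
    finally have "t - s \<le> D$i$i" using t by linarith
    moreover have "D$i$i \<le> s"
      using upper[of i] member_le_sum[of i UNIV "\<lambda>k. \<bar>W$k$k\<bar>"] by (simp add: s_def)
    ultimately show "\<bar>D$i$j\<bar> \<le> \<bar>t\<bar> + s"
      using diag by (cases "i = j") (auto simp: is_diag_def s_def sum_nonneg)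
  qed
qed

lemma Dopt_nonempty:
  fixes W :: "real^'n^'n"
  assumes "transpose W = W"
  shows "\<exists>D. D \<in> Dopt W"
proof -
  obtain c where "psd (W + c *\<^sub>R mat 1)" using psd_add_scaleR_mat_1_exists[OF assms] ..
  then have D0: "- c *\<^sub>R mat 1 \<in> dual_feasible W"
    by (simp add: dual_feasible_def is_diag_def mat_def)
  define t0 where "t0 = trace (- c *\<^sub>R mat 1 :: real^'n^'n)"
  define F where "F = dual_feasible W \<inter> {D. t0 \<le> trace D}"
  have "closed F"
    unfolding F_def
    by (intro closed_Int closed_dual_feasible closed_Collect_le continuous_intros
        continuous_on_trace)
  then have "compact F"
    using bounded_dual_feasible_trace_ge by (simp add: F_def compact_eq_bounded_closed)
  moreover have "F \<noteq> {}" using D0 by (auto simp: F_def t0_def)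
  ultimately obtain D where D: "D \<in> F" and max: "\<forall>D'\<in>F. trace D' \<le> trace D"
    using continuous_attains_sup[OF _ _ continuous_on_trace] by blast
  moreover have "t0 \<le> trace D" using max D0 by (simp add: F_def t0_def)
  ultimately have "trace D' \<le> trace D" if "D' \<in> dual_feasible W" for D'
    using that by (cases "t0 \<le> trace D'") (auto simp: F_def)
  then show ?thesis using D by (auto simp: Dopt_eq F_def)
qed

section \<open>Complementary slackness\<close>

lemma inner_scaleR_matrix_vector:
  fixes A :: "real^'n^'n"
  shows "(c *\<^sub>R x) \<bullet> (A *v (c *\<^sub>R x)) = c\<^sup>2 * (x \<bullet> (A *v x))"
  by (simp add: matrix_vector_mult_scaleR power2_eq_square)

lemma convex_psd_annihilator_slice:
  "convex {X :: real^'n^'n. psd X \<and> X ** M = 0 \<and> trace X = t}"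
proof (rule convexI)
  fix X Y :: "real^'n^'n" and u v :: real
  assume "X \<in> {X. psd X \<and> X ** M = 0 \<and> trace X = t}"
    and "Y \<in> {X. psd X \<and> X ** M = 0 \<and> trace X = t}"
    and "0 \<le> u" "0 \<le> v" "u + v = 1"
  moreover have "(u *\<^sub>R X + v *\<^sub>R Y) ** M = u *\<^sub>R (X ** M) + v *\<^sub>R (Y ** M)"
    by (simp add: matrix_add_rdistrib scalar_matrix_assoc)
  ultimately show "u *\<^sub>R X + v *\<^sub>R Y \<in> {X. psd X \<and> X ** M = 0 \<and> trace X = t}"
    by (auto simp: psd_add psd_scaleR trace_add trace_scaleR simp flip: distrib_right)
qed

lemma compact_psd_annihilator_slice:
  "compact {X :: real^'n^'n. psd X \<and> X ** M = 0 \<and> trace X = t}"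
proof -
  have "bounded {X :: real^'n^'n. psd X \<and> X ** M = 0 \<and> trace X = t}"
    by (rule bounded_matrix_entrywise[where B = t]) (use psd_entry_le_trace in blast)
  moreover have "closed {X :: real^'n^'n. psd X \<and> X ** M = 0 \<and> trace X = t}"
  proof -
    have "closed ((\<lambda>X. X ** M) -` {0})"
      unfolding matrix_matrix_mult_def
      by (intro continuous_closed_vimage closed_singleton continuous_intros)
    then have "closed {X :: real^'n^'n. X ** M = 0}" by (simp add: vimage_def)
    moreover have "closed {X :: real^'n^'n. trace X = t}"
      by (intro closed_Collect_eq continuous_intros continuous_on_trace)
    ultimately show ?thesis
      unfolding Collect_conj_eq by (intro closed_Int closed_psd)
  qed
  ultimately show ?thesis by (simp add: compact_eq_bounded_closed)
qed

lemma no_annihilator_imp_diagonal_certificate: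
  fixes M :: "real^'n^'n"
  assumes "psd M" and no_annihilator: "\<forall>P\<in>Pset. P ** M \<noteq> 0"
  shows "\<exists>y. 0 < (\<Sum>i\<in>UNIV. y$i) \<and>
    (\<forall>x. x \<noteq> 0 \<longrightarrow> M *v x = 0 \<longrightarrow> x \<bullet> (diagonal_matrix y *v x) < 0)"
proof -
  define n where "n = real CARD('n)"
  define K where "K = {X :: real^'n^'n. psd X \<and> X ** M = 0 \<and> trace X = n}"
  define diag :: "real^'n^'n \<Rightarrow> real^'n" where "diag X = (\<chi> i. X$i$i)" for X
  have "linear diag" by (rule linearI) (simp_all add: diag_def vec_eq_iff)
  have one_notin: "(\<chi> i. 1) \<notin> diag ` K"
  proof
    assume "(\<chi> i. 1) \<in> diag ` K"
    then obtain X where "X \<in> K" and "(\<chi> i. 1) = diag X" ..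
    then have "X \<in> Pset" and "X ** M = 0"
      by (auto simp: K_def Pset_def diag_def vec_eq_iff)
    with no_annihilator show False by blast
  qed
  have convex: "convex (diag ` K)"
    unfolding K_def by (intro convex_linear_image \<open>linear diag\<close> convex_psd_annihilator_slice)
  have compact: "compact (diag ` K)"
    unfolding K_def by (intro compact_continuous_image compact_psd_annihilator_slice
        linear_continuous_on \<open>linear diag\<close>[unfolded linear_conv_bounded_linear])
  obtain a b where a1: "a \<bullet> (\<chi> i. 1) < b" and aK: "\<forall>t\<in>diag ` K. b < a \<bullet> t"
    using separating_hyperplane_closed_point[OF convex compact_imp_closed[OF compact] one_notin]
    by blast
  define y :: "real^'n" where "y = (\<chi> i. b / n - a$i)"
  have "(\<Sum>i\<in>UNIV. y$i) = b - a \<bullet> (\<chi> i. 1)"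
    by (simp add: y_def sum_subtractf inner_vec_def n_def)
  with a1 have "0 < (\<Sum>i\<in>UNIV. y$i)" by simp
  moreover have "x \<bullet> (diagonal_matrix y *v x) < 0" if "x \<noteq> 0" and "M *v x = 0" for x
  proof -
    define s where "s = n / (x \<bullet> x)"
    have "0 < s" using \<open>x \<noteq> 0\<close> by (simp add: s_def n_def)
    define X where "X = s *\<^sub>R outer x x"
    have "X \<in> K"
    proof -
      have "psd X" using \<open>0 < s\<close> by (simp add: X_def psd_scaleR psd_outer)
      moreover have "X ** M = s *\<^sub>R outer x (M *v x)"
        using outer_matrix_mult[OF psd_transpose[OF assms(1)]]
        by (simp add: X_def scalar_matrix_assoc[symmetric])
      moreover have "trace X = n"
        using \<open>x \<noteq> 0\<close> by (simp add: X_def trace_scaleR trace_outer s_def)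
      ultimately show ?thesis using \<open>M *v x = 0\<close> by (simp add: K_def)
    qed
    have "(\<Sum>i\<in>UNIV. y$i * X$i$i) = b / n * trace X - a \<bullet> diag X"
      by (simp add: y_def trace_def diag_def inner_vec_def left_diff_distrib sum_subtractf
          sum_distrib_left)
    also have "\<dots> < 0"
      using aK \<open>X \<in> K\<close> by (auto simp: K_def n_def)
    finally have "s * (x \<bullet> (diagonal_matrix y *v x)) < 0"
      by (simp add: X_def outer_def inner_diagonal_matrix sum_distrib_left power2_eq_square
          mult_ac)
    with \<open>0 < s\<close> show ?thesis by (simp add: mult_less_0_iff)
  qed
  ultimately show ?thesis by blast
qed

lemma compact_pos_lower_bound:
  fixes f :: "'a::topological_space \<Rightarrow> real"
  assumes "compact S" and "continuous_on S f" and "\<forall>x\<in>S. 0 < f x"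
  shows "\<exists>m>0. \<forall>x\<in>S. m \<le> f x"
proof (cases "S = {}")
  case True
  then show ?thesis by (intro exI[of _ 1]) simp
next
  case False
  with assms obtain x0 where "x0 \<in> S" and "\<forall>x\<in>S. f x0 \<le> f x"
    using continuous_attains_inf by blast
  with assms(3) show ?thesis by blast
qed

lemma quadratic_form_le_if_le_on_sphere:
  fixes A B :: "real^'n^'n"
  assumes "\<And>u. norm u = 1 \<Longrightarrow> u \<bullet> (A *v u) \<le> u \<bullet> (B *v u)"
  shows "x \<bullet> (A *v x) \<le> x \<bullet> (B *v x)"
proof (cases "x = 0")
  case True
  then show ?thesis by simp
next
  case False
  define u where "u = (1 / norm x) *\<^sub>R x"
  have "x = norm x *\<^sub>R u" using False by (simp add: u_def)
  then have "x \<bullet> (A *v x) = (norm x)\<^sup>2 * (u \<bullet> (A *v u))"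
    and "x \<bullet> (B *v x) = (norm x)\<^sup>2 * (u \<bullet> (B *v u))"
    by (metis inner_scaleR_matrix_vector)+
  moreover have "u \<bullet> (A *v u) \<le> u \<bullet> (B *v u)" using False by (intro assms) (simp add: u_def)
  ultimately show ?thesis by (simp add: mult_left_mono)
qed

lemma psd_diff_scaleR_exists:
  fixes M Y :: "real^'n^'n"
  assumes "psd M" and "transpose Y = Y"
    and neg: "\<forall>x. x \<noteq> 0 \<longrightarrow> M *v x = 0 \<longrightarrow> x \<bullet> (Y *v x) < 0"
  shows "\<exists>e>0. psd (M - e *\<^sub>R Y)"
proof -
  define f where "f x = x \<bullet> (M *v x)" for x
  define g where "g x = x \<bullet> (Y *v x)" for x
  define S where "S = sphere 0 1 \<inter> {x. 0 \<le> g x}"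
  have "0 < f x" if "x \<in> S" for x
  proof -
    have "x \<noteq> 0" and "\<not> g x < 0" using that by (auto simp: S_def)
    with neg psd_quadratic_form_zero_imp_kernel[OF assms(1)] have "f x \<noteq> 0"
      by (auto simp: f_def g_def)
    with psd_nonneg[OF assms(1)] show ?thesis by (simp add: f_def order_less_le)
  qed
  moreover have "compact S"
    unfolding S_def g_def
    by (intro compact_Int_closed compact_sphere closed_Collect_le continuous_intros)
  moreover have "continuous_on S f"
    unfolding f_def by (intro continuous_intros)
  ultimately obtain m where "0 < m" and m: "\<forall>x\<in>S. m \<le> f x"
    using compact_pos_lower_bound by blast
  have "bounded (g ` sphere 0 1)"
    unfolding g_def
    by (intro compact_imp_bounded compact_continuous_image compact_sphere continuous_intros)
  then obtain B where "0 < B" and B: "\<forall>x\<in>sphere 0 1. g x \<le> B"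
    by (force simp: bounded_pos)
  define e where "e = m / B"
  have "0 < e" using \<open>0 < m\<close> \<open>0 < B\<close> by (simp add: e_def)
  have on_sphere: "e * g u \<le> f u" if "norm u = 1" for u
  proof (cases "0 \<le> g u")
    case True
    with that have "m \<le> f u" using m by (simp add: S_def)
    moreover have "e * g u \<le> e * B" using B that \<open>0 < e\<close> by simp
    ultimately show ?thesis using \<open>0 < B\<close> by (simp add: e_def)
  next
    case False
    then have "e * g u \<le> 0" using \<open>0 < e\<close> by (simp add: mult_nonneg_nonpos)
    then show ?thesis using psd_nonneg[OF assms(1), of u] by (simp add: f_def)
  qed
  have "x \<bullet> ((e *\<^sub>R Y) *v x) \<le> x \<bullet> (M *v x)" for x
  proof (rule quadratic_form_le_if_le_on_sphere)
    fix u :: "real^'n" assume "norm u = 1"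
    with on_sphere show "u \<bullet> ((e *\<^sub>R Y) *v u) \<le> u \<bullet> (M *v u)"
      by (simp add: f_def g_def scaleR_matrix_vector_assoc[symmetric])
  qed
  then have "0 \<le> x \<bullet> ((M - e *\<^sub>R Y) *v x)" for x
    by (simp add: matrix_vector_mult_diff_rdistrib inner_diff_right)
  moreover have "transpose (M - e *\<^sub>R Y) = M - e *\<^sub>R Y"
    using psd_transpose[OF assms(1)] assms(2) by (simp add: transpose_def vec_eq_iff)
  ultimately show ?thesis using \<open>0 < e\<close> by (auto simp: psd_def)
qed

lemma Dopt_complementary_slackness:
  fixes W :: "real^'n^'n"
  assumes "D \<in> Dopt W"
  shows "\<exists>P\<in>Pset. P ** (W - D) = 0"
proof (rule ccontr)
  assume no_annihilator: "\<not> (\<exists>P\<in>Pset. P ** (W - D) = 0)"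
  from assms have feasible: "D \<in> dual_feasible W"
    and opt: "\<forall>D'\<in>dual_feasible W. trace D' \<le> trace D"
    by (auto simp: Dopt_eq)
  then have "psd (W - D)" by (simp add: dual_feasible_def)
  obtain y where "0 < (\<Sum>i\<in>UNIV. y$i)"
    and neg: "\<forall>x. x \<noteq> 0 \<longrightarrow> (W - D) *v x = 0 \<longrightarrow> x \<bullet> (diagonal_matrix y *v x) < 0"
    using no_annihilator_imp_diagonal_certificate[OF \<open>psd (W - D)\<close>] no_annihilator by blast
  have "transpose (diagonal_matrix y) = diagonal_matrix y"
    by (simp add: transpose_def diagonal_matrix_def vec_eq_iff)
  then obtain e where "0 < e" and "psd (W - D - e *\<^sub>R diagonal_matrix y)"
    using psd_diff_scaleR_exists[OF \<open>psd (W - D)\<close> _ neg] by blast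
  then have "D + e *\<^sub>R diagonal_matrix y \<in> dual_feasible W"
    using feasible is_diag_diagonal_matrix[of y]
    by (simp add: dual_feasible_def is_diag_def diff_diff_eq)
  then have "trace D + e * (\<Sum>i\<in>UNIV. y$i) \<le> trace D"
    using opt by (fastforce simp: trace_add trace_scaleR trace_diagonal_matrix)
  with \<open>0 < e\<close> \<open>0 < (\<Sum>i\<in>UNIV. y$i)\<close> show False
    by (simp add: mult_le_0_iff)
qed

lemma frob_diff_right: "frob P (A - B) = frob P A - frob P B"
  by (simp add: frob_def algebra_simps sum_subtractf)

lemma frob_Pset_diag:
  assumes "P \<in> Pset" and "is_diag D"
  shows "frob P D = trace D"
proof -
  have "(\<Sum>j\<in>UNIV. P$i$j * D$i$j) = (\<Sum>j\<in>UNIV. if j = i then D$i$i else 0)" for i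
    using assms by (intro sum.cong) (auto simp: Pset_def is_diag_def)
  then show ?thesis by (simp add: frob_def trace_def)
qed

lemma frob_Pset_dual_feasible:
  assumes "P \<in> Pset" and "D \<in> dual_feasible W"
  shows "frob P W = frob P (W - D) + trace D"
  using assms frob_Pset_diag[of P D] by (simp add: frob_diff_right dual_feasible_def)

lemma Pset_annihilator_diag_eq:
  assumes "P \<in> Pset" and "is_diag D" and "P ** (W - D) = 0"
  shows "D$i$i = (P ** W)$i$i"
proof -
  have "(P ** D)$i$i = (\<Sum>k\<in>UNIV. P$i$k * D$k$i)"
    by (simp add: matrix_matrix_mult_def)
  also have "\<dots> = (\<Sum>k\<in>UNIV. if k = i then D$i$i else 0)"
    using assms(1,2) by (intro sum.cong) (auto simp: Pset_def is_diag_def)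
  finally have "(P ** D)$i$i = D$i$i" by simp
  moreover have "P ** W = P ** D"
    using matrix_add_ldistrib[of P "W - D" D] assms(3) by simp
  ultimately show ?thesis by simp
qed

lemma Dopt_unique:
  assumes "D \<in> Dopt W" and "D' \<in> Dopt W"
  shows "D' = D"
proof -
  obtain P where P: "P \<in> Pset" "P ** (W - D) = 0"
    using Dopt_complementary_slackness[OF assms(1)] by blast
  have D: "D \<in> dual_feasible W" and D': "D' \<in> dual_feasible W"
    using assms by (auto simp: Dopt_eq)
  have "trace D' = trace D"
    using assms by (auto simp: Dopt_eq intro: order.antisym)
  then have "frob P (W - D') = frob P (W - D)"
    using frob_Pset_dual_feasible[OF P(1) D] frob_Pset_dual_feasible[OF P(1) D'] by simp
  also have "\<dots> = 0"
    using P D by (simp add: frob_psd_eq_0_iff Pset_def dual_feasible_def)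
  finally have "P ** (W - D') = 0"
    using P(1) D' by (simp add: frob_psd_eq_0_iff Pset_def dual_feasible_def)
  then have "D'$i$i = D$i$i" for i
    using Pset_annihilator_diag_eq[OF P(1) _ P(2)] Pset_annihilator_diag_eq[OF P(1)] D D'
    by (simp add: dual_feasible_def)
  then show ?thesis
    using D D' by (simp add: dual_feasible_def is_diag_def vec_eq_iff) metis
qed

lemma Popt_eq:
  assumes "D \<in> Dopt W"
  shows "Popt W = {P \<in> Pset. P ** (W - D) = 0}"
proof -
  have D: "D \<in> dual_feasible W" and "psd (W - D)"
    using assms by (auto simp: Dopt_eq dual_feasible_def)
  have objective: "frob P W = frob P (W - D) + trace D" if "P \<in> Pset" for P
    using frob_Pset_dual_feasible[OF that D] .
  have gap_nonneg: "0 \<le> frob P (W - D)" if "P \<in> Pset" for P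
    using that \<open>psd (W - D)\<close> frob_psd_nonneg[of P "W - D"] by (simp add: Pset_def)
  have gap_eq_0: "frob P (W - D) = 0 \<longleftrightarrow> P ** (W - D) = 0" if "P \<in> Pset" for P
    using that \<open>psd (W - D)\<close> frob_psd_eq_0_iff[of P "W - D"] by (simp add: Pset_def)
  obtain P0 where "P0 \<in> Pset" "P0 ** (W - D) = 0"
    using Dopt_complementary_slackness[OF assms] by blast
  then have P0: "frob P0 W = trace D" using objective gap_eq_0 by simp
  show ?thesis
  proof (intro set_eqI iffI)
    fix P assume "P \<in> Popt W"
    then have "P \<in> Pset" and "frob P W \<le> frob P0 W"
      using \<open>P0 \<in> Pset\<close> by (auto simp: Popt_def)
    then have "frob P (W - D) = 0"
      using P0 objective gap_nonneg by fastforce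
    with \<open>P \<in> Pset\<close> gap_eq_0 show "P \<in> {P \<in> Pset. P ** (W - D) = 0}" by simp
  next
    fix P assume "P \<in> {P \<in> Pset. P ** (W - D) = 0}"
    then have "P \<in> Pset" and "frob P W = trace D"
      using objective gap_eq_0 by auto
    then show "P \<in> Popt W"
      using objective gap_nonneg by (fastforce simp: Popt_def)
  qed
qed

theorem theorem6:
  fixes W :: "real^'n^'n"
  assumes "\<forall>i j. 0 \<le> W$i$j"
    and "transpose W = W"
    and "\<forall>i. W$i$i = 0"
  shows "\<exists>Dstar. Dopt W = {Dstar} \<and> Popt W = {P \<in> Pset. P ** (W - Dstar) = 0}"
proof -
  obtain D where "D \<in> Dopt W" using Dopt_nonempty[OF assms(2)] ..
  then have "Dopt W = {D}" using Dopt_unique by blast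
  with Popt_eq[OF \<open>D \<in> Dopt W\<close>] show ?thesis by blast
qed

end
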